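(* Let $G$ be a tree with vertex set $V$. Then \[R(G)\geq 1+\sum_{v\in V}\left(\sqrt{d_v}-1\right),\] with equality if $G$ is a star.
   Context: $d_v$ is the degree of vertex $v$; the Randi\'c index is $R(G)=\sum_{uv\in E(G)}\frac{1}{\sqrt{d_ud_v}}$ (equal to $0$ for a single vertex). A star is a tree with one vertex adjacent to all others. *)

theory Defs
  imports Complex_Main
begin

definition simple_graph :: "'a set \<Rightarrow> 'a set set \<Rightarrow> bool" where
  "simple_graph V E \<longleftrightarrow> finite V \<and> (\<forall>e\<in>E. e \<subseteq> V \<and> card e = 2)"

definition adj :: "'a set set \<Rightarrow> 'a \<Rightarrow> 'a \<Rightarrow> bool" where
  "adj E u v \<longleftrightarrow> {u, v} \<in> E"

definition degree :: "'a set set \<Rightarrow> 'a \<Rightarrow> nat" where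
  "degree E v = card {e \<in> E. v \<in> e}"

definition connected_graph :: "'a set \<Rightarrow> 'a set set \<Rightarrow> bool" where
  "connected_graph V E \<longleftrightarrow> V \<noteq> {} \<and> (\<forall>u\<in>V. \<forall>v\<in>V. (adj E)\<^sup>*\<^sup>* u v)"

definition is_cycle :: "'a set set \<Rightarrow> 'a list \<Rightarrow> bool" where
  "is_cycle E vs \<longleftrightarrow> length vs \<ge> 3 \<and> distinct vs \<and>
     (\<forall>i. Suc i < length vs \<longrightarrow> adj E (vs ! i) (vs ! Suc i)) \<and>
     adj E (last vs) (hd vs)"

definition acyclic_graph :: "'a set \<Rightarrow> 'a set set \<Rightarrow> bool" where
  "acyclic_graph V E \<longleftrightarrow> \<not> (\<exists>vs. set vs \<subseteq> V \<and> is_cycle E vs)"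

definition is_tree :: "'a set \<Rightarrow> 'a set set \<Rightarrow> bool" where
  "is_tree V E \<longleftrightarrow> simple_graph V E \<and> connected_graph V E \<and> acyclic_graph V E"

definition is_star :: "'a set \<Rightarrow> 'a set set \<Rightarrow> bool" where
  "is_star V E \<longleftrightarrow> is_tree V E \<and> (\<exists>c\<in>V. \<forall>v\<in>V. v \<noteq> c \<longrightarrow> adj E c v)"

definition randic :: "'a set set \<Rightarrow> real" where
  "randic E = (\<Sum>e\<in>E. 1 / sqrt (\<Prod>v\<in>e. real (degree E v)))"

end

theory Submission
  imports Defs
begin

text \<open>A tree has one more vertex than edges, and every vertex v lies on d_v edges, so that
  sum_v sqrt d_v equals the sum over the edges uv of 1/sqrt d_u + 1/sqrt d_v. Hence
  R(G) - 1 - sum_v (sqrt d_v - 1) is the sum over the edges uv of (1 - 1/sqrt d_u)(1 - 1/sqrt d_v).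
  Every summand is nonnegative because endpoints of edges have degree at least 1, and for a star
  every summand vanishes because every edge has a leaf as an endpoint.\<close>

lemma simple_graph_edgeE:
  assumes "simple_graph V E" "e \<in> E"
  obtains a b where "e = {a, b}" "a \<noteq> b" "a \<in> V" "b \<in> V"
  using assms by (auto simp: simple_graph_def card_2_iff)

lemma simple_graph_edge_at_vertexE:
  assumes "simple_graph V E" "e \<in> E" "x \<in> e"
  obtains z where "e = {x, z}" "z \<noteq> x" "z \<in> V"
  using assms by (elim simple_graph_edgeE) (auto simp: insert_commute)

lemma simple_graph_finite_edges: "simple_graph V E \<Longrightarrow> finite E"
  unfolding simple_graph_def by (meson PowI finite_Pow_iff finite_subset subsetI)

lemma degree_ge_1:
  assumes "simple_graph V E" "e \<in> E" "v \<in> e"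
  shows "degree E v \<ge> 1"
proof -
  have "{e \<in> E. v \<in> e} \<noteq> {}" "finite {e \<in> E. v \<in> e}"
    using assms simple_graph_finite_edges[OF assms(1)] by auto
  then show ?thesis by (simp add: degree_def Suc_le_eq card_gt_0_iff)
qed

lemma sum_edges_sum_endpoints:
  fixes f :: "'a \<Rightarrow> 'b::comm_semiring_1"
  assumes "simple_graph V E"
  shows "(\<Sum>e\<in>E. \<Sum>v\<in>e. f v) = (\<Sum>v\<in>V. of_nat (degree E v) * f v)"
proof -
  have fin: "finite V" "finite E"
    using assms simple_graph_finite_edges by (auto simp: simple_graph_def)
  have "(\<Sum>v\<in>V. of_nat (degree E v) * f v) = (\<Sum>v\<in>V. \<Sum>e\<in>{e\<in>E. v\<in>e}. f v)"
    by (simp add: degree_def)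
  also have "\<dots> = (\<Sum>e\<in>E. \<Sum>v\<in>{v\<in>V. v\<in>e}. f v)"
    by (rule sum.swap_restrict[OF fin])
  also have "\<dots> = (\<Sum>e\<in>E. \<Sum>v\<in>e. f v)"
    using assms by (intro sum.cong refl) (auto simp: simple_graph_def Collect_conj_eq Int_absorb1)
  finally show ?thesis ..
qed

lemma prod_one_minus_card_2:
  fixes x :: "'a \<Rightarrow> 'b::comm_ring_1"
  assumes "card e = 2"
  shows "(\<Prod>v\<in>e. 1 - x v) = 1 - (\<Sum>v\<in>e. x v) + (\<Prod>v\<in>e. x v)"
  using assms by (auto simp: card_2_iff algebra_simps)

lemma real_sqrt_prod: "sqrt (\<Prod>x\<in>A. f x) = (\<Prod>x\<in>A. sqrt (f x))"
  by (induction A rule: infinite_finite_induct) (simp_all add: real_sqrt_mult)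

text \<open>No hypothesis on degrees is needed: for an isolated vertex, 0 * (1 / sqrt 0) = sqrt 0 holds
  because division by zero yields zero.\<close>

lemma randic_eq_sum_edge_defects:
  assumes "simple_graph V E"
  shows "randic E = (\<Sum>v\<in>V. sqrt (degree E v)) - card E
                    + (\<Sum>e\<in>E. \<Prod>v\<in>e. 1 - 1 / sqrt (degree E v))"
proof -
  define y where "y v = 1 / sqrt (degree E v)" for v
  have "(\<Sum>e\<in>E. \<Prod>v\<in>e. 1 - y v) = (\<Sum>e\<in>E. 1 - (\<Sum>v\<in>e. y v) + (\<Prod>v\<in>e. y v))"
    using assms by (intro sum.cong) (auto simp: simple_graph_def prod_one_minus_card_2)
  also have "\<dots> = card E - (\<Sum>e\<in>E. \<Sum>v\<in>e. y v) + (\<Sum>e\<in>E. \<Prod>v\<in>e. y v)"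
    by (simp add: sum.distrib sum_subtractf)
  also have "(\<Sum>e\<in>E. \<Sum>v\<in>e. y v) = (\<Sum>v\<in>V. sqrt (degree E v))"
    by (simp add: sum_edges_sum_endpoints[OF assms] y_def real_div_sqrt)
  also have "(\<Sum>e\<in>E. \<Prod>v\<in>e. y v) = randic E"
    by (simp add: randic_def y_def prod_dividef real_sqrt_prod)
  finally show ?thesis by (simp add: y_def)
qed

definition adj_path :: "'a set set \<Rightarrow> 'a list \<Rightarrow> bool" where
  "adj_path E vs \<longleftrightarrow> distinct vs \<and> (\<forall>i. Suc i < length vs \<longrightarrow> adj E (vs ! i) (vs ! Suc i))"

lemma is_cycle_iff_adj_path:
  "is_cycle E vs \<longleftrightarrow> length vs \<ge> 3 \<and> adj_path E vs \<and> adj E (last vs) (hd vs)"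
  unfolding is_cycle_def adj_path_def by blast

lemma adj_path_take: "adj_path E vs \<Longrightarrow> adj_path E (take n vs)"
  unfolding adj_path_def by simp

lemma adj_path_Cons:
  "adj_path E (x # vs) \<longleftrightarrow> x \<notin> set vs \<and> adj_path E vs \<and> (vs \<noteq> [] \<longrightarrow> adj E x (hd vs))"
proof -
  have "(\<forall>i. Suc i < length (x # vs) \<longrightarrow> adj E ((x # vs) ! i) ((x # vs) ! Suc i)) \<longleftrightarrow>
        (vs \<noteq> [] \<longrightarrow> adj E x (hd vs)) \<and> (\<forall>i. Suc i < length vs \<longrightarrow> adj E (vs ! i) (vs ! Suc i))"
    by (cases vs) (simp_all add: All_less_Suc2)
  then show ?thesis unfolding adj_path_def by auto
qed

lemma acyclic_graph_mono:
  "acyclic_graph V E \<Longrightarrow> V' \<subseteq> V \<Longrightarrow> E' \<subseteq> E \<Longrightarrow> acyclic_graph V' E'"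
  unfolding acyclic_graph_def is_cycle_def adj_def by blast

text \<open>A neighbour off the path would prolong it, and a neighbour further along the path than the
  second vertex would close a cycle.\<close>

lemma acyclic_unextendable_path_start_degree:
  assumes G: "simple_graph V E" and acyc: "acyclic_graph V E"
    and path: "adj_path E (x # vs)" "set (x # vs) \<subseteq> V"
    and unext: "\<And>z. z \<in> V - set (x # vs) \<Longrightarrow> \<not> adj E z x"
  shows "degree E x \<le> 1"
proof -
  have "{e \<in> E. x \<in> e} \<subseteq> {{x, hd vs}}"
  proof
    fix e assume "e \<in> {e \<in> E. x \<in> e}"
    then obtain z where e: "e \<in> E" "e = {x, z}" "z \<noteq> x" "z \<in> V"
      using G by (auto elim: simple_graph_edge_at_vertexE)
    then have xz: "adj E x z" "adj E z x" by (auto simp: adj_def insert_commute)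
    then obtain i where i: "i < length vs" "vs ! i = z"
      using unext[of z] e by (auto simp: in_set_conv_nth)
    have "i = 0"
    proof (rule ccontr)
      assume "i \<noteq> 0"
      let ?c = "take (Suc (Suc i)) (x # vs)"
      have "last ?c = z" "hd ?c = x" "length ?c \<ge> 3"
        using i \<open>i \<noteq> 0\<close> by (auto simp: last_conv_nth)
      then have "is_cycle E ?c"
        unfolding is_cycle_iff_adj_path using xz adj_path_take[OF path(1), of "Suc (Suc i)"] by simp
      moreover have "set ?c \<subseteq> V" using path(2) set_take_subset by fast
      ultimately show False using acyc by (auto simp: acyclic_graph_def)
    qed
    then show "e \<in> {{x, hd vs}}" using e i by (simp add: hd_conv_nth)
  qed
  then have "degree E x \<le> card {{x, hd vs}}"
    unfolding degree_def by (rule card_mono[rotated]) simp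
  then show ?thesis by simp
qed

lemma acyclic_graph_has_leaf:
  assumes G: "simple_graph V E" and acyc: "acyclic_graph V E" and "V \<noteq> {}"
  shows "\<exists>x\<in>V. degree E x \<le> 1"
proof -
  define P where "P vs \<longleftrightarrow> adj_path E vs \<and> set vs \<subseteq> V" for vs
  obtain v where "v \<in> V" using \<open>V \<noteq> {}\<close> by blast
  then have "P [v]" by (simp add: P_def adj_path_def)
  moreover have "\<forall>vs. P vs \<longrightarrow> length vs < Suc (card V)"
    using G by (auto simp: P_def adj_path_def simple_graph_def
                     dest!: distinct_card intro!: le_imp_less_Suc) (metis card_mono)
  ultimately obtain ws where "P ws" and longest: "\<And>us. P us \<Longrightarrow> length us \<le> length ws"
    by (metis ex_has_greatest_nat)
  moreover have "ws \<noteq> []" using longest[OF \<open>P [v]\<close>] by auto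
  ultimately obtain x vs where ws: "ws = x # vs"
    and path: "adj_path E (x # vs)" "set (x # vs) \<subseteq> V"
    unfolding P_def by (metis neq_Nil_conv)
  have "\<not> adj E z x" if "z \<in> V - set (x # vs)" for z
  proof
    assume "adj E z x"
    then have "P (z # x # vs)" using that path by (simp add: P_def adj_path_Cons)
    then show False using longest[of "z # x # vs"] ws by simp
  qed
  then show ?thesis
    using acyclic_unextendable_path_start_degree[OF G acyc path] path(2) by auto
qed

lemma acyclic_graph_card_edges_less:
  assumes "simple_graph V E" "acyclic_graph V E" "V \<noteq> {}"
  shows "card E < card V"
  using assms
proof (induction "card V" arbitrary: V E rule: less_induct)
  case less
  obtain x where x: "x \<in> V" "degree E x \<le> 1"
    using acyclic_graph_has_leaf[OF less.prems] by blast
  have finV: "finite V" using less.prems(1) by (simp add: simple_graph_def)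
  show ?case
  proof (cases "V = {x}")
    case True
    then have "E = {}" using less.prems(1) by (auto elim: simple_graph_edgeE)
    then show ?thesis using True by simp
  next
    case False
    define E' where "E' = {e \<in> E. x \<notin> e}"
    have "card E' < card (V - {x})"
    proof (rule less.hyps)
      show "card (V - {x}) < card V" using finV x(1) by (rule card_Diff1_less)
      show "simple_graph (V - {x}) E'" using less.prems(1) by (auto simp: simple_graph_def E'_def)
      show "acyclic_graph (V - {x}) E'"
        using less.prems(2) by (rule acyclic_graph_mono) (auto simp: E'_def)
      show "V - {x} \<noteq> {}" using False x by auto
    qed
    moreover have "E = E' \<union> {e \<in> E. x \<in> e}" by (auto simp: E'_def)
    then have "card E \<le> card E' + degree E x" unfolding degree_def by (metis card_Un_le)
    ultimately show ?thesis using x finV by (simp add: card_Diff_singleton)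
  qed
qed

text \<open>Joining every vertex other than a root r to a neighbour strictly closer to r is an injection
  of V - {r} into E.\<close>

lemma connected_graph_card_vertices_le:
  assumes G: "simple_graph V E" and conn: "connected_graph V E"
  shows "card V \<le> card E + 1"
proof -
  obtain r where r: "r \<in> V" using conn by (auto simp: connected_graph_def)
  define dist where "dist v = (LEAST n. (adj E ^^ n) r v)" for v
  have walk: "(adj E ^^ dist v) r v" if "v \<in> V" for v
  proof -
    have "\<exists>n. (adj E ^^ n) r v"
      using conn r that by (auto simp: connected_graph_def rtranclp_power)
    then show ?thesis unfolding dist_def by (rule LeastI_ex)
  qed
  have "\<forall>v\<in>V - {r}. \<exists>u. adj E u v \<and> dist u < dist v"
  proof
    fix v assume v: "v \<in> V - {r}"
    obtain m where m: "dist v = Suc m"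
      using walk[of v] v by (cases "dist v") auto
    then obtain u where "(adj E ^^ m) r u" "adj E u v"
      using walk[of v] v by (auto elim: relpowp_Suc_E)
    moreover have "dist u \<le> m" unfolding dist_def by (rule Least_le) fact
    ultimately show "\<exists>u. adj E u v \<and> dist u < dist v" using m by auto
  qed
  then obtain par where par: "\<And>v. v \<in> V - {r} \<Longrightarrow> adj E (par v) v \<and> dist (par v) < dist v"
    by (metis bchoice)
  have "inj_on (\<lambda>v. {par v, v}) (V - {r})"
  proof (rule inj_onI)
    fix v w assume v: "v \<in> V - {r}" and w: "w \<in> V - {r}" and "{par v, v} = {par w, w}"
    then have "v = w \<or> par v = w \<and> par w = v" by (auto simp: doubleton_eq_iff)
    then show "v = w" using par[OF v] par[OF w] by auto
  qed
  moreover have "(\<lambda>v. {par v, v}) ` (V - {r}) \<subseteq> E" using par by (auto simp: adj_def)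
  ultimately have "card (V - {r}) \<le> card E"
    using simple_graph_finite_edges[OF G] by (rule card_inj_on_le)
  then show ?thesis using r G by (simp add: simple_graph_def)
qed

lemma tree_card_vertices:
  assumes "is_tree V E"
  shows "card V = card E + 1"
proof -
  have G: "simple_graph V E" and acyc: "acyclic_graph V E" and conn: "connected_graph V E"
    using assms by (auto simp: is_tree_def)
  then have "V \<noteq> {}" by (simp add: connected_graph_def)
  then show ?thesis
    using acyclic_graph_card_edges_less[OF G acyc] connected_graph_card_vertices_le[OF G conn]
    by linarith
qed

lemma acyclic_graph_no_triangle:
  assumes "acyclic_graph V E" "{a, b} \<in> E" "{b, c} \<in> E" "{c, a} \<in> E"
    and "a \<in> V" "b \<in> V" "c \<in> V" "distinct [a, b, c]"
  shows False
proof -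
  have "is_cycle E [a, b, c]"
    using assms(2-4,8) by (auto simp: is_cycle_def adj_def less_Suc_eq nth_Cons')
  then show False using assms(1,5-7) by (auto simp: acyclic_graph_def)
qed

lemma star_edge_has_leaf:
  assumes star: "is_star V E" and e: "e \<in> E"
  shows "\<exists>w\<in>e. degree E w = 1"
proof -
  have G: "simple_graph V E" and acyc: "acyclic_graph V E"
    using star by (auto simp: is_star_def is_tree_def)
  obtain c where c: "c \<in> V" "\<And>v. v \<in> V \<Longrightarrow> v \<noteq> c \<Longrightarrow> {c, v} \<in> E"
    using star by (auto simp: is_star_def adj_def)
  have center: "c \<in> e'" if "e' \<in> E" for e'
  proof (rule ccontr)
    assume "c \<notin> e'"
    obtain a b where "e' = {a, b}" "a \<noteq> b" "a \<in> V" "b \<in> V"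
      using G \<open>e' \<in> E\<close> by (rule simple_graph_edgeE)
    then show False
      using acyclic_graph_no_triangle[OF acyc, of a b c] c \<open>e' \<in> E\<close> \<open>c \<notin> e'\<close>
      by (auto simp: insert_commute)
  qed
  obtain w where w: "e = {c, w}" "w \<noteq> c"
    using G e center[OF e] by (rule simple_graph_edge_at_vertexE)
  have "{e' \<in> E. w \<in> e'} = {e}"
  proof
    show "{e' \<in> E. w \<in> e'} \<subseteq> {e}"
    proof
      fix e' assume e': "e' \<in> {e' \<in> E. w \<in> e'}"
      then have "e' \<in> E" by simp
      then obtain z where "e' = {c, z}"
        using G center by (metis simple_graph_edge_at_vertexE)
      then show "e' \<in> {e}" using e' w by auto
    qed
  qed (use e w in auto)
  then show ?thesis using w by (auto simp: degree_def)
qed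

theorem theorem4p1:
  fixes V :: "'a set" and E :: "'a set set"
  assumes "is_tree V E"
  shows "randic E \<ge> 1 + (\<Sum>v\<in>V. sqrt (real (degree E v)) - 1) \<and>
         (is_star V E \<longrightarrow> randic E = 1 + (\<Sum>v\<in>V. sqrt (real (degree E v)) - 1))"
proof -
  have G: "simple_graph V E" using assms by (simp add: is_tree_def)
  define defect where "defect e = (\<Prod>v\<in>e. 1 - 1 / sqrt (degree E v))" for e
  have randic: "randic E = 1 + (\<Sum>v\<in>V. sqrt (degree E v) - 1) + (\<Sum>e\<in>E. defect e)"
    using randic_eq_sum_edge_defects[OF G] tree_card_vertices[OF assms]
    by (simp add: defect_def sum_subtractf)
  have "defect e \<ge> 0" if "e \<in> E" for e
    unfolding defect_def using degree_ge_1[OF G that] by (intro prod_nonneg) (auto simp: divide_le_eq_1)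
  moreover have "defect e = 0" if "is_star V E" "e \<in> E" for e
    unfolding defect_def using star_edge_has_leaf[OF that] G \<open>e \<in> E\<close>
    by (intro prod_zero) (auto elim: simple_graph_edgeE)
  ultimately show ?thesis using randic by (simp add: sum_nonneg)
qed

end
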